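(* Let $k$ be a real division algebra and $a_1,\dots,a_n\in k$. Define recursively, for strings of digits (with $\wedge$ the empty string): $P[\wedge]=0$, $Q[\wedge]=1$, $P[a_n]=1$, $Q[a_n]=a_n$, and for $i<n$, $P[a_i,\dots,a_n]=Q[a_{i+1},\dots,a_n]$, $Q[a_i,\dots,a_n]=a_iQ[a_{i+1},\dots,a_n]+P[a_{i+1},\dots,a_n]$. Let $Q_n=Q[a_1,\dots,a_n]$. If $Q[a_i,\dots,a_n]\neq0$ for all $1\le i\le n$, then \[\prod_{i=0}^{n-1}\left\|T^{-1}_{a_{i+1}}\cdots T^{-1}_{a_n}0\right\|=\frac{1}{\|Q_n\|}.\]
   Context: $k\in\{\mathbb{R},\mathbb{C},\mathbb{H},\mathbb{O}\}$ with Euclidean norm $\|x\|^2=x\overline x$; $T_a^{-1}x=(x+a)^{-1}$. *)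

theory Defs
  imports "HOL-Analysis.Analysis"
begin

text \<open>A real normed division algebra (the four algebras R, C, H, O with the Euclidean
norm), presented as a finite-dimensional Euclidean space carrying a bilinear
multiplication with unit e whose norm is multiplicative.  Multiplication need not be
associative (octonions), so it is an explicit parameter.\<close>
definition normed_div_alg :: "('a::euclidean_space \<Rightarrow> 'a \<Rightarrow> 'a) \<Rightarrow> 'a \<Rightarrow> bool" where
  "normed_div_alg mul e \<longleftrightarrow> bilinear mul \<and> (\<forall>x. mul e x = x \<and> mul x e = x)
     \<and> (\<forall>x y. norm (mul x y) = norm x * norm y)"

definition dinv :: "('a \<Rightarrow> 'a \<Rightarrow> 'a) \<Rightarrow> 'a \<Rightarrow> 'a \<Rightarrow> 'a" where
  "dinv mul e x = (THE y. mul x y = e \<and> mul y x = e)"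

definition Tinv :: "('a::real_vector \<Rightarrow> 'a \<Rightarrow> 'a) \<Rightarrow> 'a \<Rightarrow> 'a \<Rightarrow> 'a \<Rightarrow> 'a" where
  "Tinv mul e a x = dinv mul e (x + a)"

text \<open>T^{-1}_{b_1} ... T^{-1}_{b_m} 0 for the string [b_1,...,b_m].\<close>
definition Tchain :: "('a::real_vector \<Rightarrow> 'a \<Rightarrow> 'a) \<Rightarrow> 'a \<Rightarrow> 'a list \<Rightarrow> 'a" where
  "Tchain mul e bs = foldr (Tinv mul e) bs 0"

text \<open>(P[s], Q[s]) for a string s: P[empty]=0, Q[empty]=1,
  P[a#s] = Q[s], Q[a#s] = a Q[s] + P[s]  (this gives P[a]=1, Q[a]=a).\<close>
fun PQ :: "('a::real_vector \<Rightarrow> 'a \<Rightarrow> 'a) \<Rightarrow> 'a \<Rightarrow> 'a list \<Rightarrow> 'a \<times> 'a" where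
  "PQ mul e [] = (0, e)"
| "PQ mul e (b # bs) = (snd (PQ mul e bs), mul b (snd (PQ mul e bs)) + fst (PQ mul e bs))"

definition Pc :: "('a::real_vector \<Rightarrow> 'a \<Rightarrow> 'a) \<Rightarrow> 'a \<Rightarrow> 'a list \<Rightarrow> 'a" where
  "Pc mul e bs = fst (PQ mul e bs)"

definition Qc :: "('a::real_vector \<Rightarrow> 'a \<Rightarrow> 'a) \<Rightarrow> 'a \<Rightarrow> 'a list \<Rightarrow> 'a" where
  "Qc mul e bs = snd (PQ mul e bs)"

end

theory Submission
  imports Defs
begin

text \<open>With \<open>t = T\<^sup>-\<^sup>1\<^sub>b\<^sub>1 \<cdots> T\<^sup>-\<^sup>1\<^sub>b\<^sub>m 0\<close> for a string \<open>s = [b\<^sub>1,\<dots>,b\<^sub>m]\<close>, induction on \<open>s\<close> gives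
  \<open>t Q[s] = P[s]\<close>: indeed \<open>Q[b # s] = b Q[s] + P[s] = (t + b) Q[s]\<close>, and \<open>(t + b)\<^sup>-\<^sup>1\<close>
  cancels \<open>t + b\<close> on the left. Taking norms, the factor belonging to \<open>b # s\<close> is
  \<open>\<parallel>Q[s]\<parallel> / \<parallel>Q[b # s]\<parallel>\<close>, and the product telescopes to \<open>1 / \<parallel>Q\<^sub>n\<parallel>\<close>.
  The algebra need not be associative; left cancellation \<open>x\<^sup>-\<^sup>1 (x y) = y\<close> comes instead
  from the conjugate \<open>x\<^sup>* = 2\<langle>x, e\<rangle> e - x\<close>, which by polarisation of \<open>\<parallel>x y\<parallel> = \<parallel>x\<parallel> \<parallel>y\<parallel>\<close>
  is adjoint to left multiplication by \<open>x\<close>, so that \<open>x\<^sup>* (x y) = \<parallel>x\<parallel>\<^sup>2 y\<close>.\<close>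

lemma Tchain_Cons: "Tchain mul e (b # bs) = dinv mul e (Tchain mul e bs + b)"
  by (simp add: Tchain_def Tinv_def)

lemma Qc_Nil: "Qc mul e [] = e"
  and Pc_Cons: "Pc mul e (b # bs) = Qc mul e bs"
  and Qc_Cons: "Qc mul e (b # bs) = mul b (Qc mul e bs) + Pc mul e bs"
  by (simp_all add: Pc_def Qc_def)

locale normed_div_algebra =
  fixes mul :: "'a::euclidean_space \<Rightarrow> 'a \<Rightarrow> 'a" and e :: 'a
  assumes normed_div_alg: "normed_div_alg mul e"
begin

lemma bilinear_mul: "bilinear mul"
  and mul_unit_left [simp]: "mul e x = x"
  and mul_unit_right [simp]: "mul x e = x"
  and norm_mul: "norm (mul x y) = norm x * norm y"
  using normed_div_alg unfolding normed_div_alg_def by auto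

lemmas mul_add_left = bilinear_ladd[OF bilinear_mul]
  and mul_add_right = bilinear_radd[OF bilinear_mul]
  and mul_diff_left = bilinear_lsub[OF bilinear_mul]
  and mul_diff_right = bilinear_rsub[OF bilinear_mul]
  and mul_scaleR_left = bilinear_lmul[OF bilinear_mul]
  and mul_scaleR_right = bilinear_rmul[OF bilinear_mul]
  and mul_zero_left = bilinear_lzero[OF bilinear_mul]

lemma norm_unit: "norm e = 1"
proof -
  obtain b :: 'a where "b \<in> Basis"
    using nonempty_Basis by blast
  then have "b \<noteq> 0" by auto
  have "e \<noteq> 0"
  proof
    assume "e = 0"
    then have "b = 0"
      using mul_unit_left[of b] mul_zero_left by simp
    with \<open>b \<noteq> 0\<close> show False ..
  qed
  moreover have "norm e = norm e * norm e"
    using norm_mul[of e e] by simp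
  ultimately show ?thesis by simp
qed

lemma inner_mul_left_same: "inner (mul y x) (mul y z) = (norm y)\<^sup>2 * inner x z"
proof -
  have square: "inner (mul y u) (mul y u) = (norm y)\<^sup>2 * inner u u" for u
    using norm_mul[of y u] by (simp add: power2_norm_eq_inner[symmetric] power_mult_distrib)
  show ?thesis
    using square[of "x + z"] square[of x] square[of z]
    by (simp add: mul_add_right inner_add_left inner_add_right inner_commute algebra_simps)
qed

lemma inner_mul_polarized:
  "inner (mul y x) (mul w z) + inner (mul w x) (mul y z) = 2 * inner y w * inner x z"
  using inner_mul_left_same[of "y + w" x z] inner_mul_left_same[of y x z]
    inner_mul_left_same[of w x z]
  by (simp add: mul_add_left inner_add_left inner_add_right inner_commute
      power2_norm_eq_inner algebra_simps)

definition dconj :: "'a \<Rightarrow> 'a" where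
  "dconj y = (2 * inner y e) *\<^sub>R e - y"

lemma inner_mul_dconj: "inner (mul (dconj y) x) z = inner x (mul y z)"
  using inner_mul_polarized[of y x e z]
  by (simp add: dconj_def mul_diff_left mul_scaleR_left inner_diff_left)

lemma mul_dconj_mul: "mul (dconj y) (mul y x) = (norm y)\<^sup>2 *\<^sub>R x"
proof -
  let ?d = "mul (dconj y) (mul y x) - (norm y)\<^sup>2 *\<^sub>R x"
  have "inner ?d z = 0" for z
    using inner_mul_dconj[of y "mul y x" z] inner_mul_left_same[of y x z]
    by (simp add: inner_diff_left)
  from this[of ?d] show ?thesis by simp
qed

lemma mul_dconj_commute: "mul y (dconj y) = mul (dconj y) y"
  by (simp add: dconj_def mul_diff_left mul_diff_right mul_scaleR_left mul_scaleR_right)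

lemma dinv_eq_dconj:
  assumes "y \<noteq> 0"
  shows "dinv mul e y = (1 / (norm y)\<^sup>2) *\<^sub>R dconj y"
  unfolding dinv_def
proof (rule the_equality)
  have "mul (dconj y) y = (norm y)\<^sup>2 *\<^sub>R e"
    using mul_dconj_mul[of y e] by simp
  then show "mul y ((1 / (norm y)\<^sup>2) *\<^sub>R dconj y) = e
      \<and> mul ((1 / (norm y)\<^sup>2) *\<^sub>R dconj y) y = e"
    using assms by (simp add: mul_dconj_commute mul_scaleR_left mul_scaleR_right)
next
  fix z
  assume "mul y z = e \<and> mul z y = e"
  then have "(norm y)\<^sup>2 *\<^sub>R z = dconj y"
    using mul_dconj_mul[of y z] by simp
  moreover have "z = (1 / (norm y)\<^sup>2) *\<^sub>R ((norm y)\<^sup>2 *\<^sub>R z)"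
    using assms by simp
  ultimately show "z = (1 / (norm y)\<^sup>2) *\<^sub>R dconj y"
    by simp
qed

lemma dinv_mul_cancel_left:
  assumes "y \<noteq> 0"
  shows "mul (dinv mul e y) (mul y x) = x"
  using assms by (simp add: dinv_eq_dconj mul_scaleR_left mul_dconj_mul)

lemma Tchain_mul_Qc:
  assumes "\<forall>k<length s. Qc mul e (drop k s) \<noteq> 0"
  shows "mul (Tchain mul e s) (Qc mul e s) = Pc mul e s"
  using assms
proof (induction s)
  case Nil
  show ?case by (simp add: Tchain_def Pc_def Qc_def mul_zero_left)
next
  case (Cons b bs)
  let ?t = "Tchain mul e bs"
  have "mul ?t (Qc mul e bs) = Pc mul e bs"
    using Cons.IH Cons.prems by fastforce
  then have Q_factor: "Qc mul e (b # bs) = mul (?t + b) (Qc mul e bs)"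
    by (simp add: Qc_Cons mul_add_left)
  moreover have "?t + b \<noteq> 0"
    using Cons.prems Q_factor mul_zero_left by fastforce
  ultimately show ?case
    by (simp add: Tchain_Cons Pc_Cons dinv_mul_cancel_left)
qed

lemma prod_norm_Tchain_suffixes:
  assumes "\<forall>k<length s. Qc mul e (drop k s) \<noteq> 0"
  shows "(\<Prod>k<length s. norm (Tchain mul e (drop k s))) * norm (Qc mul e s) = 1"
  using assms
proof (induction s)
  case Nil
  show ?case by (simp add: Qc_Nil norm_unit)
next
  case (Cons b bs)
  let ?tail = "\<Prod>k<length bs. norm (Tchain mul e (drop k bs))"
  have step: "norm (Tchain mul e (b # bs)) * norm (Qc mul e (b # bs)) = norm (Qc mul e bs)"
    using Tchain_mul_Qc[OF Cons.prems] by (simp add: norm_mul[symmetric] Pc_Cons)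
  have tail: "?tail * norm (Qc mul e bs) = 1"
    using Cons.IH Cons.prems by fastforce
  have "(\<Prod>k<length (b # bs). norm (Tchain mul e (drop k (b # bs))))
      = norm (Tchain mul e (b # bs)) * ?tail"
    by (simp only: length_Cons prod.lessThan_Suc_shift drop_0 drop_Suc_Cons)
  then have "(\<Prod>k<length (b # bs). norm (Tchain mul e (drop k (b # bs))))
        * norm (Qc mul e (b # bs))
      = norm (Tchain mul e (b # bs)) * norm (Qc mul e (b # bs)) * ?tail"
    by (simp only: ac_simps)
  also have "\<dots> = 1"
    using step tail by (simp add: mult.commute)
  finally show ?case .
qed

end

theorem lemma2p3:
  fixes mul :: "'a::euclidean_space \<Rightarrow> 'a \<Rightarrow> 'a" and e :: 'a
    and a :: "nat \<Rightarrow> 'a" and n :: nat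
  assumes "normed_div_alg mul e"
    and "\<forall>i\<in>{1..n}. Qc mul e (map a [i..<Suc n]) \<noteq> 0"
  shows "(\<Prod>i<n. norm (Tchain mul e (map a [Suc i..<Suc n])))
           = 1 / norm (Qc mul e (map a [1..<Suc n]))"
proof -
  interpret normed_div_algebra mul e
    using assms(1) by unfold_locales
  let ?s = "map a [1..<Suc n]"
  have suffixes: "drop k ?s = map a [Suc k..<Suc n]" for k
    by (simp add: drop_map del: upt_Suc)
  have "\<forall>k<length ?s. Qc mul e (drop k ?s) \<noteq> 0"
  proof (intro allI impI)
    fix k
    assume "k < length ?s"
    then have "Suc k \<in> {1..n}" by (simp del: upt_Suc)
    with assms(2) have "Qc mul e (map a [Suc k..<Suc n]) \<noteq> 0"
      by blast
    then show "Qc mul e (drop k ?s) \<noteq> 0"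
      unfolding suffixes .
  qed
  from prod_norm_Tchain_suffixes[OF this]
  have "(\<Prod>i<n. norm (Tchain mul e (map a [Suc i..<Suc n]))) * norm (Qc mul e ?s) = 1"
    by (simp only: suffixes length_map length_upt diff_Suc_1)
  then show ?thesis
    by (metis eq_divide_imp mult_zero_right zero_neq_one)
qed

end
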